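(* Let $p$ be a prime number and $G$ a transitive group of degree $p$. Then $\#G^{\mathrm{ab}}$ is a multiple of $p$ if and only if $G\cong C_{p}$.
   Context: A transitive group of degree $p$ is a subgroup of $\mathfrak{S}_p$ acting transitively on $p$ points. $G^{\mathrm{ab}}:=G/[G,G]$ is the abelianization. *)

theory Defs
  imports "HOL-Algebra.Algebra"
begin

definition transitive_on_points :: "nat \<Rightarrow> (nat \<Rightarrow> nat) set \<Rightarrow> bool" where
  "transitive_on_points n H \<longleftrightarrow> (\<forall>i\<in>{1..n}. \<forall>j\<in>{1..n}. \<exists>\<sigma>\<in>H. \<sigma> i = j)"

definition abelianization :: "('a, 'b) monoid_scheme \<Rightarrow> 'a set monoid" where
  "abelianization G = G Mod (derived G (carrier G))"

end

theory Submission
  imports Defs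
begin

(* The orbits of a normal subgroup N of a transitive group G of degree p are permuted
   transitively by G, so they all have the same size, a divisor of p: either N is trivial
   or N is transitive, and then p divides #N. As #G divides p!, p^2 does not divide #G, so
   p dividing #G^ab = #G / #[G,G] forces [G,G] = 1. An abelian transitive group acts
   regularly, hence #G = p and G is cyclic. Conversely C_p is abelian of order p. *)

lemma (in group) comm_group_if_derived_eq_singleton:
  assumes "derived G (carrier G) = {\<one>}"
  shows "comm_group G"
proof (rule group_comm_groupI)
  fix x y assume x: "x \<in> carrier G" and y: "y \<in> carrier G"
  then have "x \<otimes> y \<otimes> inv x \<otimes> inv y \<in> derived G (carrier G)"
    unfolding derived_def by (blast intro: generate.incl)
  then have "x \<otimes> y \<otimes> inv x \<otimes> inv y = \<one>"
    using assms by simp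
  then show "x \<otimes> y = y \<otimes> x"
    using x y by (metis inv_closed inv_solve_right m_closed l_one)
qed

lemma (in group) order_abelianization_mult_card_derived:
  "order (abelianization G) * card (derived G (carrier G)) = order G"
  using lagrange[OF normal_imp_subgroup[OF derived_self_is_normal]]
  by (simp add: abelianization_def FactGroup_def order_def)

lemma (in group) iso_integer_mod_group_if_ord_eq_order:
  assumes "finite (carrier G)" and x: "x \<in> carrier G" and ord: "ord x = order G"
  shows "G \<cong> integer_mod_group (order G)"
proof -
  let ?p = "order G"
  define h where "h k = x [^] (k :: int)" for k
  have h_eq: "h a = h b \<longleftrightarrow> int ?p dvd b - a" for a b
    unfolding h_def using int_pow_eq[OF x] ord by simp
  have carrier: "carrier (integer_mod_group ?p) = {0..<int ?p}"
    using assms(1) order_gt_0_iff_finite by (simp add: carrier_integer_mod_group)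
  have "h \<in> hom (integer_mod_group ?p) G"
  proof (rule homI)
    fix a b
    show "h a \<in> carrier G"
      unfolding h_def using x by simp
    have "h ((a + b) mod int ?p) = h (a + b)"
      unfolding h_eq by (simp add: mod_eq_dvd_iff)
    then show "h (a \<otimes>\<^bsub>integer_mod_group ?p\<^esub> b) = h a \<otimes> h b"
      unfolding h_def using int_pow_mult[OF x] by simp
  qed
  moreover have inj: "inj_on h {0..<int ?p}"
    by (rule inj_onI) (simp add: h_eq mod_eq_dvd_iff[symmetric])
  moreover have "h ` {0..<int ?p} = carrier G"
  proof (rule card_subset_eq[OF assms(1)])
    show "h ` {0..<int ?p} \<subseteq> carrier G"
      unfolding h_def using x by auto
    show "card (h ` {0..<int ?p}) = card (carrier G)"
      using card_image[OF inj] by (simp add: order_def)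
  qed
  ultimately have "h \<in> iso (integer_mod_group ?p) G"
    by (simp add: iso_def bij_betw_def carrier)
  then show ?thesis
    using group.iso_sym[OF group_integer_mod_group] is_iso_def by blast
qed

lemma (in group) iso_integer_mod_group_if_prime_order:
  assumes "Factorial_Ring.prime (order G)"
  shows "G \<cong> integer_mod_group (order G)"
proof -
  have p: "1 < order G"
    using prime_gt_1_nat[OF assms] .
  then have "carrier G \<noteq> {\<one>}"
    by (auto simp: order_def)
  then obtain x where x: "x \<in> carrier G" "x \<noteq> \<one>"
    by blast
  have "ord x dvd order G" and "ord x \<noteq> 1"
    using ord_dvd_group_order ord_eq_1 x by auto
  then have "ord x = order G"
    using assms unfolding prime_nat_iff by blast
  moreover have "finite (carrier G)"
    using p order_gt_0_iff_finite by simp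
  ultimately show ?thesis
    using iso_integer_mod_group_if_ord_eq_order x(1) by blast
qed

lemma prime_square_not_dvd_fact:
  assumes "Factorial_Ring.prime p"
  shows "\<not> p * p dvd (fact p :: nat)"
proof
  assume "p * p dvd (fact p :: nat)"
  moreover have "(fact p :: nat) = p * fact (p - 1)"
    using fact_reduce[OF prime_gt_0_nat[OF assms], where 'a = nat] by simp
  ultimately have "p dvd (fact (p - 1) :: nat)"
    using prime_gt_0_nat[OF assms] by simp
  then show False
    using prime_dvd_fact_iff[OF assms] prime_gt_0_nat[OF assms] by simp
qed

lemma transitive_on_pointsE:
  assumes "transitive_on_points n H" and "i \<in> {1..n}" and "j \<in> {1..n}"
  obtains \<sigma> where "\<sigma> \<in> H" and "\<sigma> i = j"
  using assms unfolding transitive_on_points_def by blast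

lemma permutes_of_subgroup_sym_group:
  assumes "subgroup H (sym_group n)" and "\<sigma> \<in> H"
  shows "\<sigma> permutes {1..n}"
  using subgroup.subset[OF assms(1)] assms(2) sym_group_carrier by blast

lemma card_subgroup_sym_group_dvd_fact:
  assumes "subgroup H (sym_group n)"
  shows "card H dvd fact n"
  using group.lagrange[OF sym_group_is_group assms] sym_group_card_carrier
  by (metis dvd_triv_right order_def)

lemma subgroup_sym_group_if_normal:
  assumes "subgroup H (sym_group n)" and "N \<lhd> (sym_group n)\<lparr>carrier := H\<rparr>"
  shows "subgroup N (sym_group n)"
  using group.incl_subgroup[OF sym_group_is_group assms(1) normal_imp_subgroup[OF assms(2)]] .

(* Elements of BijGroup are extensional, hence the restriction to {1..n}. *)
lemma group_action_subgroup_sym_group: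
  assumes "subgroup K (sym_group n)"
  shows "group_action ((sym_group n)\<lparr>carrier := K\<rparr>) {1..n} (\<lambda>\<sigma>. restrict \<sigma> {1..n})"
proof -
  have perm: "\<sigma> permutes {1..n}" if "\<sigma> \<in> K" for \<sigma>
    using permutes_of_subgroup_sym_group[OF assms that] .
  have "(\<lambda>\<sigma>. restrict \<sigma> {1..n}) \<in> hom ((sym_group n)\<lparr>carrier := K\<rparr>) (BijGroup {1..n})"
  proof (rule homI)
    fix \<sigma> assume "\<sigma> \<in> carrier ((sym_group n)\<lparr>carrier := K\<rparr>)"
    then show "restrict \<sigma> {1..n} \<in> carrier (BijGroup {1..n})"
      using permutes_imp_bij[OF perm] by (simp add: BijGroup_def Bij_def)
  next
    fix \<sigma> \<tau>
    assume "\<sigma> \<in> carrier ((sym_group n)\<lparr>carrier := K\<rparr>)" "\<tau> \<in> carrier ((sym_group n)\<lparr>carrier := K\<rparr>)"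
    then have \<sigma>: "\<sigma> permutes {1..n}" and \<tau>: "\<tau> permutes {1..n}"
      using perm by auto
    have "\<tau> x \<in> {1..n}" if "x \<in> {1..n}" for x
      using permutes_in_image[OF \<tau>] that by simp
    then show "restrict (\<sigma> \<otimes>\<^bsub>(sym_group n)\<lparr>carrier := K\<rparr>\<^esub> \<tau>) {1..n} =
          restrict \<sigma> {1..n} \<otimes>\<^bsub>BijGroup {1..n}\<^esub> restrict \<tau> {1..n}"
      using \<sigma> \<tau> by (auto simp: BijGroup_def Bij_def compose_def sym_group_mult permutes_imp_bij)
  qed
  then show ?thesis
    using subgroup.subgroup_is_group[OF assms sym_group_is_group] group_BijGroup
    by (simp add: group_action_def group_hom_def group_hom_axioms_def)
qed

lemma orbit_subgroup_sym_group:
  assumes "x \<in> {1..n}"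
  shows "orbit ((sym_group n)\<lparr>carrier := K\<rparr>) (\<lambda>\<sigma>. restrict \<sigma> {1..n}) x =
    (\<lambda>\<sigma>. \<sigma> x) ` K"
  using assms unfolding orbit_def by auto

lemma orbit_subset_sym_group:
  assumes "subgroup K (sym_group n)" and "x \<in> {1..n}"
  shows "(\<lambda>\<sigma>. \<sigma> x) ` K \<subseteq> {1..n}"
proof (rule image_subsetI)
  fix \<sigma> assume "\<sigma> \<in> K"
  then show "\<sigma> x \<in> {1..n}"
    using permutes_in_image[OF permutes_of_subgroup_sym_group[OF assms(1)]] assms(2) by blast
qed

lemma transitive_on_points_iff_orbits:
  assumes "subgroup K (sym_group n)"
  shows "transitive_on_points n K \<longleftrightarrow> (\<forall>x\<in>{1..n}. (\<lambda>\<sigma>. \<sigma> x) ` K = {1..n})"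
proof
  assume tr: "transitive_on_points n K"
  show "\<forall>x\<in>{1..n}. (\<lambda>\<sigma>. \<sigma> x) ` K = {1..n}"
  proof (intro ballI equalityI subsetI)
    fix x y assume "x \<in> {1..n}" "y \<in> (\<lambda>\<sigma>. \<sigma> x) ` K"
    then show "y \<in> {1..n}"
      using orbit_subset_sym_group[OF assms] by blast
  next
    fix x y assume "x \<in> {1..n}" "y \<in> {1..n}"
    then obtain \<sigma> where "\<sigma> \<in> K" "\<sigma> x = y"
      using transitive_on_pointsE[OF tr] by blast
    then show "y \<in> (\<lambda>\<sigma>. \<sigma> x) ` K"
      by (simp add: rev_image_eqI)
  qed
next
  assume orbits: "\<forall>x\<in>{1..n}. (\<lambda>\<sigma>. \<sigma> x) ` K = {1..n}"
  show "transitive_on_points n K"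
    unfolding transitive_on_points_def
  proof (intro ballI)
    fix x y assume "x \<in> {1..n}" "y \<in> {1..n}"
    then have "y \<in> (\<lambda>\<sigma>. \<sigma> x) ` K"
      using orbits by blast
    then show "\<exists>\<sigma>\<in>K. \<sigma> x = y"
      by blast
  qed
qed

lemma transitive_on_points_dvd_card:
  assumes "subgroup K (sym_group n)" and "transitive_on_points n K" and "0 < n"
  shows "n dvd card K"
proof -
  let ?K = "(sym_group n)\<lparr>carrier := K\<rparr>" and ?\<phi> = "\<lambda>\<sigma>. restrict \<sigma> {1..n}"
  interpret A: group_action ?K "{1..n}" ?\<phi>
    using group_action_subgroup_sym_group[OF assms(1)] .
  have one: "1 \<in> {1..n}"
    using assms(3) by simp
  have "card ((\<lambda>\<sigma>. \<sigma> 1) ` K) * card (stabilizer ?K ?\<phi> 1) = card K"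
    using A.orbit_stabilizer_theorem[OF one] unfolding orbit_subgroup_sym_group[OF one]
    by (simp add: order_def)
  then have "n * card (stabilizer ?K ?\<phi> 1) = card K"
    using assms(2) one by (simp add: transitive_on_points_iff_orbits[OF assms(1)])
  then show ?thesis
    by (metis dvd_triv_left)
qed

lemma card_abelian_transitive_on_points:
  assumes "subgroup H (sym_group n)" and "transitive_on_points n H" and "0 < n"
    and "comm_group ((sym_group n)\<lparr>carrier := H\<rparr>)"
  shows "card H = n"
proof -
  have one: "1 \<in> {1..n}"
    using assms(3) by simp
  interpret C: comm_group "(sym_group n)\<lparr>carrier := H\<rparr>"
    by (rule assms(4))
  have comm: "\<sigma> \<circ> \<tau> = \<tau> \<circ> \<sigma>" if "\<sigma> \<in> H" "\<tau> \<in> H" for \<sigma> \<tau>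
    using C.m_comm[of \<sigma> \<tau>] that by (simp add: sym_group_mult)
  have "inj_on (\<lambda>\<sigma>. \<sigma> 1) H"
  proof (rule inj_onI)
    fix \<sigma> \<tau> assume \<sigma>: "\<sigma> \<in> H" and \<tau>: "\<tau> \<in> H" and eq: "\<sigma> 1 = \<tau> 1"
    show "\<sigma> = \<tau>"
    proof
      fix x
      show "\<sigma> x = \<tau> x"
      proof (cases "x \<in> {1..n}")
        case True
        then obtain g where g: "g \<in> H" "g 1 = x"
          using transitive_on_pointsE[OF assms(2) one] by blast
        have "\<sigma> x = g (\<sigma> 1)" and "\<tau> x = g (\<tau> 1)"
          using fun_cong[OF comm[OF \<sigma> g(1)], of 1] fun_cong[OF comm[OF \<tau> g(1)], of 1] g(2) by simp_all
        then show ?thesis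
          using eq by simp
      next
        case False
        then show ?thesis
          using permutes_not_in permutes_of_subgroup_sym_group[OF assms(1)] \<sigma> \<tau> by metis
      qed
    qed
  qed
  moreover have "(\<lambda>\<sigma>. \<sigma> 1) ` H = {1..n}"
    using assms(2) one transitive_on_points_iff_orbits[OF assms(1)] by blast
  ultimately have "card H = card {1..n}"
    using card_image by metis
  then show ?thesis
    by simp
qed

lemma image_orbit_normal_subgroup:
  assumes "subgroup H (sym_group n)" and "N \<lhd> (sym_group n)\<lparr>carrier := H\<rparr>" and "g \<in> H"
  shows "g ` (\<lambda>\<nu>. \<nu> x) ` N = (\<lambda>\<nu>. \<nu> (g x)) ` N"
proof -
  interpret N: normal N "(sym_group n)\<lparr>carrier := H\<rparr>"
    by (rule assms(2))
  have g: "g permutes {1..n}"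
    using permutes_of_subgroup_sym_group[OF assms(1,3)] .
  have conj: "g \<circ> \<nu> \<circ> inv' g \<in> N" "inv' g \<circ> \<nu> \<circ> g \<in> N" if "\<nu> \<in> N" for \<nu>
    using N.inv_op_closed2[of g \<nu>] N.inv_op_closed1[of g \<nu>] that assms(1,3) g
    by (simp_all add: group.m_inv_consistent[OF sym_group_is_group] sym_group_carrier sym_group_mult)
  show ?thesis
    unfolding image_image
  proof (intro equalityI image_subsetI)
    fix \<nu> assume "\<nu> \<in> N"
    moreover have "g (\<nu> x) = (g \<circ> \<nu> \<circ> inv' g) (g x)"
      by (simp add: permutes_inverses[OF g])
    ultimately show "g (\<nu> x) \<in> (\<lambda>\<nu>. \<nu> (g x)) ` N"
      using conj by blast
  next
    fix \<nu> assume "\<nu> \<in> N"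
    moreover have "\<nu> (g x) = g ((inv' g \<circ> \<nu> \<circ> g) x)"
      by (simp add: permutes_inverses[OF g])
    ultimately show "\<nu> (g x) \<in> (\<lambda>\<nu>. g (\<nu> x)) ` N"
      using conj by blast
  qed
qed

lemma card_orbit_normal_subgroup_eq:
  assumes "subgroup H (sym_group n)" and "transitive_on_points n H"
    and "N \<lhd> (sym_group n)\<lparr>carrier := H\<rparr>" and "x \<in> {1..n}" and "y \<in> {1..n}"
  shows "card ((\<lambda>\<nu>. \<nu> y) ` N) = card ((\<lambda>\<nu>. \<nu> x) ` N)"
proof -
  obtain g where g: "g \<in> H" "g x = y"
    using transitive_on_pointsE[OF assms(2,4,5)] .
  have "inj g"
    using permutes_inj[OF permutes_of_subgroup_sym_group[OF assms(1) g(1)]] .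
  then show ?thesis
    using image_orbit_normal_subgroup[OF assms(1,3) g(1), of x] g(2)
    by (metis card_image inj_on_subset subset_UNIV)
qed

lemma card_orbit_normal_subgroup_dvd:
  assumes "subgroup H (sym_group n)" and "transitive_on_points n H"
    and "N \<lhd> (sym_group n)\<lparr>carrier := H\<rparr>" and "x \<in> {1..n}"
  shows "card ((\<lambda>\<nu>. \<nu> x) ` N) dvd n"
proof -
  let ?N = "(sym_group n)\<lparr>carrier := N\<rparr>"
  interpret A: group_action ?N "{1..n}" "\<lambda>\<sigma>. restrict \<sigma> {1..n}"
    using group_action_subgroup_sym_group subgroup_sym_group_if_normal assms(1,3) by blast
  let ?orbits = "orbits ?N {1..n} (\<lambda>\<sigma>. restrict \<sigma> {1..n})"
  have orbits: "?orbits = (\<lambda>y. (\<lambda>\<nu>. \<nu> y) ` N) ` {1..n}"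
    unfolding orbits_def Setcompr_eq_image by (rule image_cong[OF refl orbit_subgroup_sym_group])
  have "card ((\<lambda>\<nu>. \<nu> x) ` N) * card ?orbits = card (\<Union> ?orbits)"
  proof (rule card_partition)
    show "finite ?orbits"
      unfolding orbits by simp
    show "finite (\<Union> ?orbits)"
      unfolding A.orbits_coverture by simp
    show "card c = card ((\<lambda>\<nu>. \<nu> x) ` N)" if "c \<in> ?orbits" for c
      using that card_orbit_normal_subgroup_eq[OF assms(1-3) assms(4)] unfolding orbits by auto
    show "c1 \<inter> c2 = {}" if "c1 \<in> ?orbits" "c2 \<in> ?orbits" "c1 \<noteq> c2" for c1 c2
      using A.disjoint_union that by blast
  qed
  then have "card ((\<lambda>\<nu>. \<nu> x) ` N) * card ?orbits = n"
    unfolding A.orbits_coverture by simp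
  then show ?thesis
    by (metis dvd_triv_left)
qed

lemma eq_id_if_card_orbits_eq_1:
  assumes "subgroup N (sym_group n)" and "\<forall>x\<in>{1..n}. card ((\<lambda>\<nu>. \<nu> x) ` N) = 1"
  shows "N = {id}"
proof -
  have id: "id \<in> N"
    using subgroup.one_closed[OF assms(1)] by (simp add: sym_group_one)
  have "\<nu> = id" if \<nu>: "\<nu> \<in> N" for \<nu>
  proof
    fix x
    show "\<nu> x = id x"
    proof (cases "x \<in> {1..n}")
      case True
      then obtain a where "(\<lambda>\<nu>. \<nu> x) ` N = {a}"
        using assms(2) card_1_singletonE by blast
      then show ?thesis
        using rev_image_eqI[OF id, of x "\<lambda>\<nu>. \<nu> x"] rev_image_eqI[OF \<nu>, of "\<nu> x" "\<lambda>\<nu>. \<nu> x"]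
        by simp
    next
      case False
      then show ?thesis
        using permutes_not_in[OF permutes_of_subgroup_sym_group[OF assms(1) \<nu>]] by simp
    qed
  qed
  then show ?thesis
    using id by blast
qed

lemma transitive_on_points_if_card_orbits_eq:
  assumes "subgroup K (sym_group n)" and "\<forall>x\<in>{1..n}. card ((\<lambda>\<sigma>. \<sigma> x) ` K) = n"
  shows "transitive_on_points n K"
proof -
  have "(\<lambda>\<sigma>. \<sigma> x) ` K = {1..n}" if "x \<in> {1..n}" for x
    using card_subset_eq[OF _ orbit_subset_sym_group[OF assms(1) that]] assms(2) that by simp
  then show ?thesis
    using transitive_on_points_iff_orbits[OF assms(1)] by blast
qed

lemma normal_subgroup_prime_degree_trivial_or_transitive:
  assumes "Factorial_Ring.prime p" and "subgroup H (sym_group p)" and "transitive_on_points p H"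
    and "N \<lhd> (sym_group p)\<lparr>carrier := H\<rparr>"
  shows "N = {id} \<or> transitive_on_points p N"
proof -
  have sub: "subgroup N (sym_group p)"
    using subgroup_sym_group_if_normal[OF assms(2,4)] .
  have one: "1 \<in> {1..p}"
    using prime_gt_0_nat[OF assms(1)] by simp
  have card_orbit: "card ((\<lambda>\<nu>. \<nu> x) ` N) = card ((\<lambda>\<nu>. \<nu> 1) ` N)" if "x \<in> {1..p}" for x
    using card_orbit_normal_subgroup_eq[OF assms(2-4) one that] .
  have "card ((\<lambda>\<nu>. \<nu> 1) ` N) dvd p"
    using card_orbit_normal_subgroup_dvd[OF assms(2-4) one] .
  then consider "card ((\<lambda>\<nu>. \<nu> 1) ` N) = 1" | "card ((\<lambda>\<nu>. \<nu> 1) ` N) = p"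
    using assms(1) unfolding prime_nat_iff by blast
  then show ?thesis
  proof cases
    case 1
    then show ?thesis
      using eq_id_if_card_orbits_eq_1[OF sub] card_orbit by auto
  next
    case 2
    then show ?thesis
      using transitive_on_points_if_card_orbits_eq[OF sub] card_orbit by auto
  qed
qed

lemma derived_eq_id_if_prime_dvd_order_abelianization:
  assumes "Factorial_Ring.prime p" and "subgroup H (sym_group p)" and "transitive_on_points p H"
    and "p dvd order (abelianization ((sym_group p)\<lparr>carrier := H\<rparr>))"
  shows "derived ((sym_group p)\<lparr>carrier := H\<rparr>) H = {id}"
proof -
  let ?G = "(sym_group p)\<lparr>carrier := H\<rparr>"
  let ?D = "derived ?G H"
  interpret G: group ?G
    using subgroup.subgroup_is_group[OF assms(2) sym_group_is_group] .
  have D: "?D \<lhd> ?G"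
    using G.derived_self_is_normal by simp
  have "\<not> p * p dvd card H"
    using prime_square_not_dvd_fact[OF assms(1)] card_subgroup_sym_group_dvd_fact[OF assms(2)]
      dvd_trans by blast
  moreover have "order (abelianization ?G) * card ?D = card H"
    using G.order_abelianization_mult_card_derived by (simp add: order_def)
  ultimately have "\<not> p dvd card ?D"
    using assms(4) by (metis mult_dvd_mono)
  then have "\<not> transitive_on_points p ?D"
    using transitive_on_points_dvd_card[OF subgroup_sym_group_if_normal[OF assms(2) D]]
      prime_gt_0_nat[OF assms(1)] by blast
  then show ?thesis
    using normal_subgroup_prime_degree_trivial_or_transitive[OF assms(1-3) D] by blast
qed

theorem lemma2p3:
  fixes p :: nat and H :: "(nat \<Rightarrow> nat) set"
  assumes "Factorial_Ring.prime p"
    and "subgroup H (sym_group p)"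
    and "transitive_on_points p H"
  shows "p dvd order (abelianization ((sym_group p)\<lparr>carrier := H\<rparr>))
         \<longleftrightarrow> (sym_group p)\<lparr>carrier := H\<rparr> \<cong> integer_mod_group p"
proof -
  let ?G = "(sym_group p)\<lparr>carrier := H\<rparr>"
  interpret G: group ?G
    using subgroup.subgroup_is_group[OF assms(2) sym_group_is_group] .
  have p: "0 < p"
    using prime_gt_0_nat[OF assms(1)] .
  show ?thesis
  proof
    assume "p dvd order (abelianization ?G)"
    then have "derived ?G H = {id}"
      using derived_eq_id_if_prime_dvd_order_abelianization[OF assms] by blast
    then have "comm_group ?G"
      using G.comm_group_if_derived_eq_singleton by (simp add: sym_group_one)
    then have "card H = p"
      using card_abelian_transitive_on_points[OF assms(2,3) p] by blast
    then show "?G \<cong> integer_mod_group p"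
      using G.iso_integer_mod_group_if_prime_order assms(1) by (simp add: order_def)
  next
    assume iso: "?G \<cong> integer_mod_group p"
    then have "card H = p"
      using iso_same_card p by (fastforce simp: carrier_integer_mod_group)
    moreover have "comm_group ?G"
      using comm_group.iso_imp_comm_group[OF abelian_integer_mod_group G.iso_sym[OF iso]] G.is_monoid
      by blast
    then have "derived ?G H = {id}"
      using comm_group.derived_eq_singleton[of ?G H] by (simp add: sym_group_one)
    ultimately show "p dvd order (abelianization ?G)"
      using G.order_abelianization_mult_card_derived by (simp add: order_def)
  qed
qed

end
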